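(* Let $(c_{i,j})_{0\le i,j\le 3}$ be real numbers satisfying the fourteen equations (E0), (R1)–(R9), (O1)–(O4). Then $$\big|\,c_{2,2}+c_{3,3}-c_{3,2}-c_{2,3}\,\big|\le \frac{\sqrt7}{4}<1 .$$
   Context: (E0): $\sum_{i=0}^3\sum_{j=0}^3 c_{i,j}=4$. Regularity equations: (R1) $c_{0,1}+c_{0,3}+c_{2,1}+c_{2,3}=c_{0,0}+c_{0,2}+c_{2,0}+c_{2,2}$; (R2) $c_{1,1}+c_{1,3}+c_{3,1}+c_{3,3}=c_{0,0}+c_{0,2}+c_{2,0}+c_{2,2}$; (R3) $c_{1,0}+c_{1,2}+c_{3,0}+c_{3,2}=c_{0,0}+c_{0,2}+c_{2,0}+c_{2,2}$; (R4) $c_{2,1}+c_{2,3}=c_{2,0}+c_{2,2}$; (R5) $c_{1,1}+c_{1,3}+3c_{3,1}+3c_{3,3}=2c_{2,0}+2c_{2,2}$; (R6) $c_{1,0}+c_{1,2}+3c_{3,0}+3c_{3,2}=2c_{2,0}+2c_{2,2}$; (R7) $c_{0,1}+c_{2,1}+3c_{0,3}+3c_{2,3}=2c_{0,2}+2c_{2,2}$; (R8) $c_{1,1}+c_{3,1}+3c_{1,3}+3c_{3,3}=2c_{0,2}+2c_{2,2}$; (R9) $c_{1,2}+c_{3,2}=c_{0,2}+c_{2,2}$. Orthogonality equations: (O1) $\sum_{i=0}^3\sum_{j=0}^3 c_{i,j}^2=4$; (O2) $c_{3,3}c_{1,1}+c_{3,2}c_{1,0}+c_{2,3}c_{0,1}+c_{2,2}c_{0,0}=0$;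 (O3) $c_{3,3}c_{1,3}+c_{3,2}c_{1,2}+c_{2,3}c_{0,3}+c_{2,2}c_{0,2}+c_{3,1}c_{1,1}+c_{3,0}c_{1,0}+c_{2,1}c_{0,1}+c_{2,0}c_{0,0}=0$; (O4) $c_{3,3}c_{3,1}+c_{3,2}c_{3,0}+c_{2,3}c_{2,1}+c_{2,2}c_{2,0}+c_{1,3}c_{1,1}+c_{1,2}c_{1,0}+c_{0,3}c_{0,1}+c_{0,2}c_{0,0}=0$. *)

theory Defs
  imports Complex_Main
begin

end

theory Submission
  imports Defs
begin

text \<open>
  The ten linear equations leave six free coordinates, say \<open>c\<^sub>1\<^sub>3, c\<^sub>2\<^sub>2, c\<^sub>2\<^sub>3,
  c\<^sub>3\<^sub>1, c\<^sub>3\<^sub>2, c\<^sub>3\<^sub>3\<close>. In them, (O1) + 2(O3) and (O1) + 2(O4) say that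
  \<open>a = c\<^sub>1\<^sub>3 + c\<^sub>3\<^sub>3\<close> and \<open>b = c\<^sub>3\<^sub>1 + c\<^sub>3\<^sub>3\<close> are roots of \<open>8x\<^sup>2 - 4x - 1\<close>, so
  \<open>(a - b)\<^sup>2\<close> is \<open>0\<close> or \<open>3/4\<close>. A further combination of (O1)-(O4) shows that the
  linear form \<open>\<gamma> = c\<^sub>2\<^sub>2 + c\<^sub>2\<^sub>3 + c\<^sub>3\<^sub>2 - 3c\<^sub>3\<^sub>3 - 2(c\<^sub>1\<^sub>3 + c\<^sub>3\<^sub>1)\<close> equals
  \<open>3/4 - 2(a - b)\<^sup>2\<close>, hence \<open>\<gamma>\<^sup>2 = 9/16\<close>, while \<open>-((O3) + (O4))/4\<close> confines the
  point to an ellipsoid on which \<open>\<gamma>\<^sup>2 + L\<^sup>2 \<le> 1\<close> for the target form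
  \<open>L = c\<^sub>2\<^sub>2 + c\<^sub>3\<^sub>3 - c\<^sub>3\<^sub>2 - c\<^sub>2\<^sub>3\<close>. Thus \<open>L\<^sup>2 \<le> 7/16\<close>.
\<close>

lemma sum_atLeast0_atMost_3: "(\<Sum>i\<in>{0..3::nat}. f i) = f 0 + f 1 + f 2 + f 3"
proof -
  have "{0..3::nat} = {0, 1, 2, 3}" by auto
  then show ?thesis by (simp add: add.assoc)
qed

lemma quadratic_roots_eq_or_diff_sq:
  fixes a b c p q :: real
  assumes "a \<noteq> 0" and p: "a * p\<^sup>2 + b * p + c = 0" and q: "a * q\<^sup>2 + b * q + c = 0"
  shows "p = q \<or> a\<^sup>2 * (p - q)\<^sup>2 = b\<^sup>2 - 4 * a * c"
proof -
  have "(p - q) * (a * (p + q) + b) = 0" using p q by algebra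
  then consider "p = q" | "a * (p + q) = - b" by fastforce
  then show ?thesis
  proof cases
    case 2
    then have "a * (a * p * q - c) = 0" using p by algebra
    then have "a * p * q = c" using \<open>a \<noteq> 0\<close> by simp
    have "a\<^sup>2 * (p - q)\<^sup>2 = (a * (p + q))\<^sup>2 - 4 * a * (a * p * q)" by algebra
    also have "\<dots> = b\<^sup>2 - 4 * a * c" using 2 \<open>a * p * q = c\<close> by simp
    finally show ?thesis ..
  qed simp
qed

lemma ellipsoid_linear_forms_bound:
  fixes s U V R :: real
  assumes "s\<^sup>2 + U\<^sup>2 + V\<^sup>2 + R\<^sup>2 - s * (U + V) - R * (1/2 + s) = 1/8"
  shows "(R - U - V)\<^sup>2 \<le> 1 - (U + V + R - 2 * s)\<^sup>2"
proof -
  let ?L = "R - U - V" and ?\<gamma> = "U + V + R - 2 * s"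
  have "1 - ?\<gamma>\<^sup>2 - ?L\<^sup>2 = ((8 * s + 4 * (?L + ?\<gamma> - 1))\<^sup>2 + 64 * (U - V)\<^sup>2) / 32"
    using assms by algebra
  also have "\<dots> \<ge> 0" by simp
  finally show ?thesis by simp
qed

theorem mainTheorem8:
  fixes c :: "nat \<Rightarrow> nat \<Rightarrow> real"
  assumes E0: "(\<Sum>i\<in>{0..3}. \<Sum>j\<in>{0..3}. c i j) = 4"
    and R1: "c 0 1 + c 0 3 + c 2 1 + c 2 3 = c 0 0 + c 0 2 + c 2 0 + c 2 2"
    and R2: "c 1 1 + c 1 3 + c 3 1 + c 3 3 = c 0 0 + c 0 2 + c 2 0 + c 2 2"
    and R3: "c 1 0 + c 1 2 + c 3 0 + c 3 2 = c 0 0 + c 0 2 + c 2 0 + c 2 2"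
    and R4: "c 2 1 + c 2 3 = c 2 0 + c 2 2"
    and R5: "c 1 1 + c 1 3 + 3 * c 3 1 + 3 * c 3 3 = 2 * c 2 0 + 2 * c 2 2"
    and R6: "c 1 0 + c 1 2 + 3 * c 3 0 + 3 * c 3 2 = 2 * c 2 0 + 2 * c 2 2"
    and R7: "c 0 1 + c 2 1 + 3 * c 0 3 + 3 * c 2 3 = 2 * c 0 2 + 2 * c 2 2"
    and R8: "c 1 1 + c 3 1 + 3 * c 1 3 + 3 * c 3 3 = 2 * c 0 2 + 2 * c 2 2"
    and R9: "c 1 2 + c 3 2 = c 0 2 + c 2 2"
    and O1: "(\<Sum>i\<in>{0..3}. \<Sum>j\<in>{0..3}. (c i j)\<^sup>2) = 4"
    and O2: "c 3 3 * c 1 1 + c 3 2 * c 1 0 + c 2 3 * c 0 1 + c 2 2 * c 0 0 = 0"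
    and O3: "c 3 3 * c 1 3 + c 3 2 * c 1 2 + c 2 3 * c 0 3 + c 2 2 * c 0 2
             + c 3 1 * c 1 1 + c 3 0 * c 1 0 + c 2 1 * c 0 1 + c 2 0 * c 0 0 = 0"
    and O4: "c 3 3 * c 3 1 + c 3 2 * c 3 0 + c 2 3 * c 2 1 + c 2 2 * c 2 0
             + c 1 3 * c 1 1 + c 1 2 * c 1 0 + c 0 3 * c 0 1 + c 0 2 * c 0 0 = 0"
  shows "\<bar>c 2 2 + c 3 3 - c 3 2 - c 2 3\<bar> \<le> sqrt 7 / 4 \<and> sqrt 7 / 4 < 1"
proof -
  have pivots:
    "c 0 0 = - c 1 3 + c 2 2 - c 3 1 - 2 * c 3 3" "c 0 1 = 1/2 - c 1 3 + c 2 3 - c 3 1 - 2 * c 3 3"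
    "c 0 2 = 1/2 + c 1 3 - c 2 2 + c 3 3" "c 0 3 = c 1 3 - c 2 3 + c 3 3"
    "c 1 0 = 1/2 - c 1 3 - c 3 1 + c 3 2 - 2 * c 3 3" "c 1 1 = 1 - c 1 3 - c 3 1 - c 3 3"
    "c 1 2 = 1/2 + c 1 3 - c 3 2 + c 3 3" "c 2 0 = 1/2 - c 2 2 + c 3 1 + c 3 3"
    "c 2 1 = 1/2 - c 2 3 + c 3 1 + c 3 3" "c 3 0 = c 3 1 - c 3 2 + c 3 3"
    using E0[unfolded sum_atLeast0_atMost_3] R1 R2 R3 R4 R5 R6 R7 R8 R9 by linarith+
  note O = O1[unfolded sum_atLeast0_atMost_3] O2 O3 O4
  note O_reduced = O[unfolded pivots]
  let ?a = "c 1 3 + c 3 3" and ?b = "c 3 1 + c 3 3"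
  have "8 * ?a\<^sup>2 - 4 * ?a - 1 = 0" "8 * ?b\<^sup>2 - 4 * ?b - 1 = 0"
    using O_reduced by (simp_all add: field_simps power2_eq_square)
  then have roots: "(?a - ?b)\<^sup>2 \<in> {0, 3/4}"
    using quadratic_roots_eq_or_diff_sq[of 8 ?a "-4" "-1" ?b] by auto
  have \<gamma>_eq: "c 3 2 + c 2 3 + c 2 2 - 3 * c 3 3 - 2 * (c 1 3 + c 3 1) = 3/4 - 2 * (?a - ?b)\<^sup>2"
    using O_reduced by (simp add: field_simps power2_eq_square)
  have "(3/4 - 2 * d)\<^sup>2 = 9/16" if "d \<in> {0, 3/4}" for d :: real
    using that by (auto simp: power2_eq_square algebra_simps)
  from this[OF roots]
  have \<gamma>: "(c 3 2 + c 2 3 + c 2 2 - 3 * c 3 3 - 2 * (c 1 3 + c 3 1))\<^sup>2 = 9/16"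
    unfolding \<gamma>_eq .
  have "(c 1 3 + c 3 1)\<^sup>2 + (c 3 2 - c 3 3)\<^sup>2 + (c 2 3 - c 3 3)\<^sup>2 + (c 2 2 - c 3 3)\<^sup>2
      - (c 1 3 + c 3 1) * ((c 3 2 - c 3 3) + (c 2 3 - c 3 3))
      - (c 2 2 - c 3 3) * (1/2 + (c 1 3 + c 3 1)) = 1/8"
    using O_reduced by (simp add: field_simps power2_eq_square)
  from ellipsoid_linear_forms_bound[OF this] \<gamma>
  have "\<bar>c 2 2 + c 3 3 - c 3 2 - c 2 3\<bar>\<^sup>2 \<le> 7/16" by (simp add: algebra_simps)
  then have "\<bar>c 2 2 + c 3 3 - c 3 2 - c 2 3\<bar> \<le> sqrt (7/16)" by (rule real_le_rsqrt)
  moreover have "sqrt 7 < 4" by (rule real_less_lsqrt) simp_all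
  ultimately show ?thesis by (simp add: real_sqrt_divide)
qed

end
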